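(* Let $\mathcal{C}$ be as in the context, $\mathcal{Q}$ a prime ideal of $\mathcal{C}$, $h\in\mathcal{C}\smallsetminus\mathcal{Q}$ and $g\in\hat{\mathcal{D}}_n(\mathcal{C}[h^{-1}])\langle z\rangle$. Then there exists $H\in\mathcal{C}\smallsetminus\mathcal{Q}$ such that for every $\mathcal{P}\in V(\mathcal{Q})\smallsetminus V(H)$, $(g)_\mathcal{P}$ is defined and $\mathrm{New}((g)_\mathcal{P})=\mathrm{New}((g)_\mathcal{Q})$.
   Context: $x=(x_1,\ldots,x_n)$. For a commutative ring $A$, $\hat{\mathcal{D}}_n(A)\langle z\rangle$ is the $A[[x]]$-algebra generated by $\partial_{x_1},\ldots,\partial_{x_n}$ and a central variable $z$, with commuting $\partial_{x_i}$ and $[\partial_{x_i},a]=\frac{\partial a}{\partial x_i}z$ for $a\in A[[x]]$; elements are uniquely $P=\sum c_{\alpha\beta k}x^\alpha\partial_x^\beta z^k$ and $\mathrm{Supp}(P)=\{(\alpha,\beta,k)\in\mathbb{N}^{2n+1}:c_{\alpha\beta k}\neq0\}$. $\mathcal{C}$: commutative integral domain with $1$ (not necessarily noetherian) such that no nonzero integer lies in a prime ideal; $\mathcal{F}=\mathrm{Frac}(\mathcal{C})$; $\mathcal{C}[h^{-1}]\subset\mathcal{F}$ is the localization and $\hat{\mathcal{D}}_n(\mathcal{C}[h^{-1}])\langle z\rangle\subset\hat{\mathcal{D}}_n(\mathcal{F})\langle z\rangle$. For a prime $\mathcal{P}$, $\mathcal{F}(\mathcal{P})=\mathrm{Frac}(\mathcal{C}/\mathcal{P})$,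 and for $P$ with coefficients in the localization $\mathcal{C}_\mathcal{P}$, $(P)_\mathcal{P}\in\hat{\mathcal{D}}_n(\mathcal{F}(\mathcal{P}))\langle z\rangle$ is obtained by mapping each coefficient to $\mathcal{F}(\mathcal{P})$. $V(\mathcal{I})=\{\mathcal{P}\in\mathrm{Spec}(\mathcal{C}):\mathcal{I}\subset\mathcal{P}\}$, $V(H)=V(H\mathcal{C})$. $\mathcal{W}=\{(u,v)\in\mathbb{Z}^{2n}:u_i\le0,\ u_i+v_i\ge0\ \forall i\}$. For an element $g$ of $\hat{\mathcal{D}}_n(K)\langle z\rangle$ ($K$ a field), its Newton polyhedron is the convex hull in $\mathbb{R}^{2n+1}$ $\mathrm{New}(g)=\mathrm{conv}\big(\mathrm{Supp}(g)+\{(\alpha,\beta,0)\in\mathbb{Z}^{2n+1}:(u,v)\cdot(\alpha,\beta)\le0\ \forall(u,v)\in\mathcal{W}\}\big)$. *)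

theory Defs
  imports "HOL-Analysis.Analysis" "HOL-Computational_Algebra.Fraction_Field"
begin

definition is_ideal :: "'a::comm_ring_1 set \<Rightarrow> bool" where
  "is_ideal I \<longleftrightarrow> 0 \<in> I \<and> (\<forall>a\<in>I. \<forall>b\<in>I. a + b \<in> I) \<and> (\<forall>a\<in>I. - a \<in> I)
      \<and> (\<forall>a\<in>I. \<forall>r. r * a \<in> I)"

definition prime_ideal :: "'a::comm_ring_1 set \<Rightarrow> bool" where
  "prime_ideal P \<longleftrightarrow> is_ideal P \<and> 1 \<notin> P \<and> (\<forall>a b. a * b \<in> P \<longrightarrow> a \<in> P \<or> b \<in> P)"

text \<open>The fraction field F = Frac(C) is \<open>'c fract\<close>; C is embedded via \<open>Fract a 1\<close>.\<close>

definition loc_elem :: "'c::idom \<Rightarrow> 'c fract set" where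
  "loc_elem h = {Fract a (h ^ m) | a m. True}"

definition loc_prime :: "'c::idom set \<Rightarrow> 'c fract set" where
  "loc_prime P = {Fract a s | a s. s \<notin> P}"

text \<open>The kernel P C_P of the reduction map C_P \<rightarrow> F(P) = Frac(C/P).\<close>
definition loc_max :: "'c::idom set \<Rightarrow> 'c fract set" where
  "loc_max P = {Fract a s | a s. a \<in> P \<and> s \<notin> P}"

text \<open>An element of D_n(A)<z> given by its (unique) coefficient family
  c \<alpha> \<beta> k (coefficient of x^\<alpha> \<partial>^\<beta> z^k): coefficients in A, and
  polynomial in \<partial>, z (only finitely many (\<beta>,k) occur).\<close>
definition dhat_elem :: "'a::zero set \<Rightarrow> (('n \<Rightarrow> nat) \<Rightarrow> ('n \<Rightarrow> nat) \<Rightarrow> nat \<Rightarrow> 'a) \<Rightarrow> bool" where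
  "dhat_elem A c \<longleftrightarrow> (\<forall>\<alpha> \<beta> k. c \<alpha> \<beta> k \<in> A) \<and> finite {(\<beta>, k). \<exists>\<alpha>. c \<alpha> \<beta> k \<noteq> 0}"

definition red_defined :: "'c::idom set \<Rightarrow> (('n \<Rightarrow> nat) \<Rightarrow> ('n \<Rightarrow> nat) \<Rightarrow> nat \<Rightarrow> 'c fract) \<Rightarrow> bool" where
  "red_defined P c \<longleftrightarrow> (\<forall>\<alpha> \<beta> k. c \<alpha> \<beta> k \<in> loc_prime P)"

definition supp_red :: "'c::idom set \<Rightarrow> (('n \<Rightarrow> nat) \<Rightarrow> ('n \<Rightarrow> nat) \<Rightarrow> nat \<Rightarrow> 'c fract)
    \<Rightarrow> (('n \<Rightarrow> nat) \<times> ('n \<Rightarrow> nat) \<times> nat) set" where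
  "supp_red P c = {(\<alpha>, \<beta>, k). c \<alpha> \<beta> k \<in> loc_prime P \<and> c \<alpha> \<beta> k \<notin> loc_max P}"

definition W_set :: "(('n::finite \<Rightarrow> int) \<times> ('n \<Rightarrow> int)) set" where
  "W_set = {(u, v). \<forall>i. u i \<le> 0 \<and> u i + v i \<ge> 0}"

definition newton_cone :: "(('n::finite \<Rightarrow> int) \<times> ('n \<Rightarrow> int) \<times> int) set" where
  "newton_cone = {(a, b, k). k = 0 \<and> (\<forall>(u, v)\<in>W_set. (\<Sum>i\<in>UNIV. u i * a i + v i * b i) \<le> 0)}"

definition lattice_pt :: "('n::finite \<Rightarrow> int) \<times> ('n \<Rightarrow> int) \<times> int \<Rightarrow> (real^'n) \<times> (real^'n) \<times> real" where
  "lattice_pt p = (case p of (a, b, k) \<Rightarrow>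
      ((\<chi> i. real_of_int (a i)), (\<chi> i. real_of_int (b i)), real_of_int k))"

definition newton :: "(('n::finite \<Rightarrow> nat) \<times> ('n \<Rightarrow> nat) \<times> nat) set \<Rightarrow> ((real^'n) \<times> (real^'n) \<times> real) set" where
  "newton S = convex hull (lattice_pt `
     {(\<lambda>i. int (\<alpha> i) + a i, \<lambda>i. int (\<beta> i) + b i, int k + m) | \<alpha> \<beta> k a b m.
        (\<alpha>, \<beta>, k) \<in> S \<and> (a, b, m) \<in> newton_cone})"

end

theory Submission
  imports Defs
begin

text \<open>Write every coefficient of \<open>g\<close> as \<open>a/h\<^sup>m\<close>. For a prime \<open>P\<close> not containing \<open>h\<close>,
  the support of \<open>(g)\<^sub>P\<close> consists of the exponents whose numerator \<open>a\<close> lies outside \<open>P\<close>,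
  so it can only shrink as \<open>P\<close> grows. The Newton polyhedron only sees, in each fibre over
  \<open>(\<beta>, k)\<close>, the componentwise minimal \<open>\<alpha>\<close>, and by Dickson's lemma finitely many elements of
  \<open>Supp((g)\<^sub>Q)\<close> dominate all of it. Taking \<open>H\<close> to be \<open>h\<close> times the product of their
  numerators keeps these elements in the support for every \<open>P \<supseteq> Q\<close> avoiding \<open>H\<close>, so the
  polyhedron does not change.\<close>

lemma prime_ideal_zero: "prime_ideal P \<Longrightarrow> 0 \<in> P"
  unfolding prime_ideal_def is_ideal_def by auto

lemma prime_ideal_one: "prime_ideal P \<Longrightarrow> 1 \<notin> P"
  unfolding prime_ideal_def by auto

lemma prime_ideal_mult_notin_iff:
  "prime_ideal P \<Longrightarrow> a * b \<notin> P \<longleftrightarrow> a \<notin> P \<and> b \<notin> P"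
  unfolding prime_ideal_def is_ideal_def by (metis mult.commute)

lemma prime_ideal_prod_notin_iff:
  assumes "prime_ideal P" "finite S"
  shows "prod f S \<notin> P \<longleftrightarrow> (\<forall>s\<in>S. f s \<notin> P)"
  using assms(2)
  by (induction S rule: finite_induct)
     (simp_all add: prime_ideal_one[OF assms(1)] prime_ideal_mult_notin_iff[OF assms(1)])

lemma prime_ideal_power_notin: "prime_ideal P \<Longrightarrow> h \<notin> P \<Longrightarrow> h ^ m \<notin> P"
  by (induction m) (simp_all add: prime_ideal_one prime_ideal_mult_notin_iff)

lemma Fract_in_loc_max_iff:
  assumes P: "prime_ideal P" and s: "s \<notin> P"
  shows "Fract a s \<in> loc_max P \<longleftrightarrow> a \<in> P"
proof
  assume "Fract a s \<in> loc_max P"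
  then obtain a' s' where eq: "Fract a s = Fract a' s'" and "a' \<in> P" "s' \<notin> P"
    unfolding loc_max_def by blast
  have "s \<noteq> 0" "s' \<noteq> 0" using s \<open>s' \<notin> P\<close> prime_ideal_zero[OF P] by auto
  then have "a * s' = a' * s" using eq by (simp add: eq_fract)
  moreover have "a' * s \<in> P"
    using \<open>a' \<in> P\<close> P unfolding prime_ideal_def is_ideal_def by (metis mult.commute)
  ultimately show "a \<in> P" using \<open>s' \<notin> P\<close> prime_ideal_mult_notin_iff[OF P] by metis
next
  assume "a \<in> P"
  then show "Fract a s \<in> loc_max P" unfolding loc_max_def using s by blast
qed

lemma zero_in_loc_max: "prime_ideal P \<Longrightarrow> 0 \<in> loc_max P"
  using Fract_in_loc_max_iff[of P 1 0] prime_ideal_zero prime_ideal_one by (metis Zero_fract_def)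

lemma
  assumes P: "prime_ideal P" and s: "\<And>\<alpha> \<beta> k. s \<alpha> \<beta> k \<notin> P"
    and g: "\<And>\<alpha> \<beta> k. g \<alpha> \<beta> k = Fract (a \<alpha> \<beta> k) (s \<alpha> \<beta> k)"
  shows red_defined_Fract: "red_defined P g"
    and supp_red_Fract: "supp_red P g = {(\<alpha>, \<beta>, k). a \<alpha> \<beta> k \<notin> P}"
proof -
  have "g \<alpha> \<beta> k \<in> loc_prime P" for \<alpha> \<beta> k
    unfolding loc_prime_def g using s by blast
  then show "red_defined P g" "supp_red P g = {(\<alpha>, \<beta>, k). a \<alpha> \<beta> k \<notin> P}"
    unfolding red_defined_def supp_red_def by (simp_all add: g Fract_in_loc_max_iff[OF P s])
qed

lemma dhat_elem_loc_elem_obtain_Fract: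
  assumes "dhat_elem (loc_elem h) g"
  obtains A E where "\<And>\<alpha> \<beta> k. g \<alpha> \<beta> k = Fract (A \<alpha> \<beta> k) (h ^ E \<alpha> \<beta> k)"
proof -
  have "\<forall>\<alpha> \<beta> k. \<exists>a m. g \<alpha> \<beta> k = Fract a (h ^ m)"
    using assms unfolding dhat_elem_def loc_elem_def by blast
  then show ?thesis using that by metis
qed

lemma finite_snd_supp_red:
  assumes "prime_ideal P" "dhat_elem A g"
  shows "finite (snd ` supp_red P g)"
proof (rule finite_subset)
  show "snd ` supp_red P g \<subseteq> {(\<beta>, k). \<exists>\<alpha>. g \<alpha> \<beta> k \<noteq> 0}"
    using zero_in_loc_max[OF assms(1)] unfolding supp_red_def by (auto simp: image_subset_iff) metis
  show "finite {(\<beta>, k). \<exists>\<alpha>. g \<alpha> \<beta> k \<noteq> 0}"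
    using assms(2) unfolding dhat_elem_def by blast
qed

lemma dickson_finite_basis:
  fixes f :: "'x \<Rightarrow> 'i \<Rightarrow> nat" and key :: "'x \<Rightarrow> 'k"
  assumes "finite I" "finite (key ` S)"
  shows "\<exists>S0\<subseteq>S. finite S0 \<and> (\<forall>x\<in>S. \<exists>y\<in>S0. key y = key x \<and> (\<forall>i\<in>I. f y i \<le> f x i))"
  using assms
proof (induction I arbitrary: S rule: finite_induct)
  case empty
  then obtain S0 where "S0 \<subseteq> S" "finite S0" "key ` S = key ` S0"
    using finite_subset_image[of "key ` S" key S] by blast
  then show ?case by (metis empty_iff imageE imageI)
next
  case (insert j I)
  let ?dom = "\<lambda>T x. \<exists>y\<in>T. key y = key x \<and> (\<forall>i\<in>I. f y i \<le> f x i)"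
  obtain S0 where S0: "S0 \<subseteq> S" "finite S0" "\<forall>x\<in>S. ?dom S0 x"
    using insert.IH[OF insert.prems] by blast
  have "\<forall>v. \<exists>T\<subseteq>{x\<in>S. f x j = v}. finite T \<and> (\<forall>x\<in>{x\<in>S. f x j = v}. ?dom T x)"
  proof
    fix v
    have "finite (key ` {x\<in>S. f x j = v})"
      using insert.prems(1) by (rule finite_subset[rotated]) auto
    then show "\<exists>T\<subseteq>{x\<in>S. f x j = v}. finite T \<and> (\<forall>x\<in>{x\<in>S. f x j = v}. ?dom T x)"
      using insert.IH by blast
  qed
  then obtain T where
    "\<forall>v. T v \<subseteq> {x\<in>S. f x j = v} \<and> finite (T v) \<and> (\<forall>x\<in>{x\<in>S. f x j = v}. ?dom (T v) x)"
    by (rule choice[THEN exE])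
  then have T: "\<And>v. T v \<subseteq> {x\<in>S. f x j = v}" "\<And>v. finite (T v)"
    "\<And>x. x \<in> S \<Longrightarrow> ?dom (T (f x j)) x"
    by blast+
  txt \<open>An \<open>x\<close> not dominated at \<open>j\<close> by its dominator in \<open>S0\<close> has \<open>f x j \<le> M\<close>,
    and only the finitely many slices \<open>f x j = v\<close> with \<open>v \<le> M\<close> are needed for those.\<close>
  define M where "M = Max ((\<lambda>y. f y j) ` S0)"
  define S1 where "S1 = S0 \<union> (\<Union>v\<le>M. T v)"
  have "\<exists>y\<in>S1. key y = key x \<and> (\<forall>i\<in>insert j I. f y i \<le> f x i)" if x: "x \<in> S" for x
  proof -
    obtain y where y: "y \<in> S0" "key y = key x" "\<forall>i\<in>I. f y i \<le> f x i"
      using S0(3) x by blast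
    show ?thesis
    proof (cases "f y j \<le> f x j")
      case True
      then show ?thesis using y unfolding S1_def by auto
    next
      case False
      have "f y j \<le> M" unfolding M_def using y(1) S0(2) by simp
      with False have "f x j \<le> M" by simp
      obtain z where "z \<in> T (f x j)" "key z = key x" "\<forall>i\<in>I. f z i \<le> f x i"
        using T(3)[OF x] by blast
      moreover from this(1) have "f z j = f x j" using T(1) by blast
      ultimately show ?thesis using \<open>f x j \<le> M\<close> unfolding S1_def by auto
    qed
  qed
  moreover have "S1 \<subseteq> S" "finite S1"
    using S0(1,2) T(1,2) unfolding S1_def by auto
  ultimately show ?case by blast
qed

lemma newton_cone_shift_fst_nonneg:
  assumes "(a, b, m) \<in> newton_cone" "\<And>i. d i \<ge> 0"
  shows "(\<lambda>i. d i + a i, b, m) \<in> newton_cone"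
  unfolding newton_cone_def
proof (safe)
  show "m = 0" using assms(1) unfolding newton_cone_def by auto
next
  fix u v :: "'a \<Rightarrow> int" assume uv: "(u, v) \<in> W_set"
  have "(\<Sum>i\<in>UNIV. u i * (d i + a i) + v i * b i) =
        (\<Sum>i\<in>UNIV. u i * d i) + (\<Sum>i\<in>UNIV. u i * a i + v i * b i)"
    by (simp add: sum.distrib[symmetric] algebra_simps)
  moreover have "(\<Sum>i\<in>UNIV. u i * d i) \<le> 0"
    using uv assms(2) unfolding W_set_def by (auto intro: sum_nonpos mult_nonpos_nonneg)
  moreover have "(\<Sum>i\<in>UNIV. u i * a i + v i * b i) \<le> 0"
    using assms(1) uv unfolding newton_cone_def by auto
  ultimately show "(\<Sum>i\<in>UNIV. u i * (d i + a i) + v i * b i) \<le> 0" by linarith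
qed

lemma newton_eq_of_dominating_subset:
  fixes S0 S :: "(('n::finite \<Rightarrow> nat) \<times> ('n \<Rightarrow> nat) \<times> nat) set"
  assumes "S0 \<subseteq> S"
    and dom: "\<forall>x\<in>S. \<exists>y\<in>S0. snd y = snd x \<and> (\<forall>i. fst y i \<le> fst x i)"
  shows "newton S = newton S0"
proof -
  let ?B = "\<lambda>S. {(\<lambda>i. int (\<alpha> i) + a i, \<lambda>i. int (\<beta> i) + b i, int k + m) | \<alpha> \<beta> k a b m.
        (\<alpha>, \<beta>, k) \<in> S \<and> (a, b, m) \<in> (newton_cone :: (('n \<Rightarrow> int) \<times> ('n \<Rightarrow> int) \<times> int) set)}"
  have "?B S \<subseteq> ?B S0"
  proof
    fix p assume "p \<in> ?B S"
    then obtain \<alpha> \<beta> k a b m where p: "p = (\<lambda>i. int (\<alpha> i) + a i, \<lambda>i. int (\<beta> i) + b i, int k + m)"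
      and "(\<alpha>, \<beta>, k) \<in> S" and cone: "(a, b, m) \<in> newton_cone" by blast
    then obtain \<alpha>0 where \<alpha>0: "(\<alpha>0, \<beta>, k) \<in> S0" "\<And>i. \<alpha>0 i \<le> \<alpha> i"
      using dom by fastforce
    define a' where "a' = (\<lambda>i. int (\<alpha> i) - int (\<alpha>0 i) + a i)"
    have "(a', b, m) \<in> newton_cone"
      unfolding a'_def using newton_cone_shift_fst_nonneg[OF cone] \<alpha>0(2) by simp
    moreover have "p = (\<lambda>i. int (\<alpha>0 i) + a' i, \<lambda>i. int (\<beta> i) + b i, int k + m)"
      unfolding p a'_def by auto
    ultimately show "p \<in> ?B S0" using \<alpha>0(1) by blast
  qed
  moreover have "?B S0 \<subseteq> ?B S" using assms(1) by blast
  ultimately show ?thesis unfolding newton_def by (simp add: subset_antisym)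
qed

theorem mainTheorem6:
  fixes Q :: "'c::idom set" and h :: 'c
    and g :: "('n::finite \<Rightarrow> nat) \<Rightarrow> ('n \<Rightarrow> nat) \<Rightarrow> nat \<Rightarrow> 'c fract"
  assumes hypC: "\<And>P (m::int). prime_ideal P \<Longrightarrow> m \<noteq> 0 \<Longrightarrow> (of_int m :: 'c) \<notin> P"
    and Q: "prime_ideal Q"
    and h: "h \<notin> Q"
    and g: "dhat_elem (loc_elem h) g"
  shows "\<exists>H. H \<notin> Q \<and>
           (\<forall>P. prime_ideal P \<and> Q \<subseteq> P \<and> H \<notin> P \<longrightarrow>
              red_defined P g \<and> newton (supp_red P g) = newton (supp_red Q g))"
proof -
  obtain A E where g_eq: "\<And>\<alpha> \<beta> k. g \<alpha> \<beta> k = Fract (A \<alpha> \<beta> k) (h ^ E \<alpha> \<beta> k)"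
    using dhat_elem_loc_elem_obtain_Fract[OF g] by blast
  let ?supp = "\<lambda>P. {(\<alpha>, \<beta>, k). A \<alpha> \<beta> k \<notin> P}"
  have red: "red_defined P g" "supp_red P g = ?supp P" if P: "prime_ideal P" "h \<notin> P" for P
  proof -
    have "\<And>\<alpha> \<beta> k. h ^ E \<alpha> \<beta> k \<notin> P" by (rule prime_ideal_power_notin[OF P])
    from red_defined_Fract[OF P(1) this g_eq] supp_red_Fract[OF P(1) this g_eq]
    show "red_defined P g" "supp_red P g = ?supp P" .
  qed
  obtain S0 where S0: "S0 \<subseteq> ?supp Q" "finite S0"
    "\<forall>x\<in>?supp Q. \<exists>y\<in>S0. snd y = snd x \<and> (\<forall>i. fst y i \<le> fst x i)"
    using dickson_finite_basis[OF finite_class.finite_UNIV finite_snd_supp_red[OF Q g], of fst]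
    unfolding red(2)[OF Q h] ball_UNIV by blast
  define H where "H = h * (\<Prod>(\<alpha>, \<beta>, k)\<in>S0. A \<alpha> \<beta> k)"
  have H_notin_iff: "H \<notin> P \<longleftrightarrow> h \<notin> P \<and> S0 \<subseteq> ?supp P" if "prime_ideal P" for P
    unfolding H_def prime_ideal_mult_notin_iff[OF that] prime_ideal_prod_notin_iff[OF that S0(2)]
    by (auto simp: subset_iff)
  have "red_defined P g \<and> newton (supp_red P g) = newton (supp_red Q g)"
    if P: "prime_ideal P" "Q \<subseteq> P" "H \<notin> P" for P
  proof -
    have "h \<notin> P" "S0 \<subseteq> ?supp P" using H_notin_iff P by auto
    moreover have "?supp P \<subseteq> ?supp Q" using P(2) by auto
    ultimately have "newton (?supp P) = newton S0" "newton (?supp Q) = newton S0"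
      using newton_eq_of_dominating_subset S0 by (meson subsetD)+
    then show ?thesis using red[OF P(1) \<open>h \<notin> P\<close>] red[OF Q h] by simp
  qed
  moreover have "H \<notin> Q" using H_notin_iff[OF Q] h S0(1) by blast
  ultimately show ?thesis by blast
qed

end
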